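(* Let $0<q<1$, let $n$ be a positive integer and let $s_1,\dots,s_n$ be real numbers with $s_k>1$ for all $k$. Then \[ \prod_{k=1}^n \zeta[s_k] = \sum_{m=1}^n \sum_{(P_1,\dots,P_m)} \sum_{\nu_1=0}^{|P_1|-1}\cdots\sum_{\nu_m=0}^{|P_m|-1} \zeta\Big[p_1-\nu_1,\,p_2-\nu_2,\,\dots,\,p_m-\nu_m\Big]\prod_{j=1}^m \binom{|P_j|-1}{\nu_j}(1-q)^{\nu_j}, \] where the middle sum runs over all ordered set partitions $(P_1,\dots,P_m)$ of $\{1,\dots,n\}$ into exactly $m$ blocks, and $p_j:=\sum_{i\in P_j}s_i$.
   Context: Fix $0<q<1$. For real $x$, $[x]_q := (1-q^x)/(1-q)$. For an integer $m\ge1$ and real $s_1,\dots,s_m$ with $s_1>1$ and $s_j\ge1$ for $j\ge2$, the multiple $q$-zeta function is $\zeta[s_1,\dots,s_m] := \sum_{k_1>\cdots>k_m>0}\prod_{j=1}^m q^{(s_j-1)k_j}/[k_j]_q^{s_j}$ (sum over positive integers). An ordered set partition of a finite set $S$ into $m$ blocks is an $m$-tuple $(P_1,\dots,P_m)$ of pairwise disjoint non-empty subsets of $S$ whose union is $S$. *)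

theory Defs
  imports "HOL-Analysis.Analysis"
begin

definition qnum :: "real \<Rightarrow> real \<Rightarrow> real" where
  "qnum q x = (1 - q powr x) / (1 - q)"

definition mqzeta :: "real \<Rightarrow> real list \<Rightarrow> real" where
  "mqzeta q s = infsum
     (\<lambda>ks. \<Prod>j<length s. q powr ((s!j - 1) * real (ks!j)) / (qnum q (real (ks!j))) powr (s!j))
     {ks. length ks = length s \<and> sorted_wrt (>) ks \<and> (\<forall>k\<in>set ks. 0 < k)}"

definition ordered_set_partitions :: "'a set \<Rightarrow> nat \<Rightarrow> 'a set list set" where
  "ordered_set_partitions S m = {Ps. length Ps = m \<and> (\<forall>j<m. Ps!j \<noteq> {}) \<and>
      (\<forall>i<m. \<forall>j<m. i \<noteq> j \<longrightarrow> Ps!i \<inter> Ps!j = {}) \<and> \<Union>(set Ps) = S}"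

end

theory Submission
  imports Defs
begin

text \<open>
  Write \<open>g\<^sub>s(k) = q\<^bsup>(s-1)k\<^esup> / [k]\<^sup>s\<close> (\<open>qzeta_term q s k\<close>) for the summands of
  \<open>\<zeta>[s]\<close>. Expanding the product \<open>\<Prod>\<^sub>i \<zeta>[s\<^sub>i]\<close> gives a sum over all
  \<open>K : {1..n} \<rightarrow> {1,2,...}\<close> of \<open>\<Prod>\<^sub>i g\<^bsub>s\<^sub>i\<^esub>(K i)\<close>. Such a \<open>K\<close> is the same thing as an
  ordered set partition \<open>(P\<^sub>1,...,P\<^sub>m)\<close> (its level sets, listed by decreasing value)
  together with the strictly decreasing list \<open>k\<^sub>1 > ... > k\<^sub>m > 0\<close> of its values;
  \<open>blockwise_function\<close> is the inverse map. On a block \<open>P\<close> with \<open>p = \<Sum>\<^bsub>i\<in>P\<^esub> s\<^sub>i\<close> and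
  \<open>N = |P| - 1\<close> one has \<open>\<Prod>\<^bsub>i\<in>P\<^esub> g\<^bsub>s\<^sub>i\<^esub>(k) = q\<^bsup>-kN\<^esup> g\<^sub>p(k)\<close>; since
  \<open>g\<^bsub>p-\<nu>\<^esub>(k) = (q\<^bsup>-k\<^esup>[k])\<^sup>\<nu> g\<^sub>p(k)\<close> and \<open>1 + (1-q)q\<^bsup>-k\<^esup>[k] = q\<^bsup>-k\<^esup>\<close>, the
  binomial theorem turns \<open>q\<^bsup>-kN\<^esup> g\<^sub>p(k)\<close> into \<open>\<Sum>\<^sub>\<nu> (N choose \<nu>) (1-q)\<^sup>\<nu> g\<^bsub>p-\<nu>\<^esub>(k)\<close>.
  Summing over \<open>k\<^sub>1 > ... > k\<^sub>m\<close> produces the multiple zeta values; all terms are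
  nonnegative and absolutely summable, so the rearrangements are justified.
\<close>

lemma summable_on_prod_PiE:
  fixes f :: "'a \<Rightarrow> 'b \<Rightarrow> 'c :: {real_normed_field, banach, second_countable_topology}"
  assumes "finite A" "\<And>x. x \<in> A \<Longrightarrow> countable (B x)"
    and "\<And>x. x \<in> A \<Longrightarrow> (\<lambda>y. norm (f x y)) summable_on B x"
  shows "(\<lambda>g. \<Prod>x\<in>A. f x (g x)) summable_on PiE A B"
proof -
  have "Infinite_Set_Sum.abs_summable_on (\<lambda>g. \<Prod>x\<in>A. f x (g x)) (PiE A B)"
    using assms abs_summable_equivalent by (intro abs_summable_on_prod_PiE) blast+
  then show ?thesis
    using abs_summable_equivalent abs_summable_summable by blast
qed

lemma has_sum_sum:
  fixes f :: "'i \<Rightarrow> 'a \<Rightarrow> 'b :: topological_comm_monoid_add"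
  assumes "\<And>i. i \<in> I \<Longrightarrow> (f i has_sum S i) A"
  shows "((\<lambda>x. \<Sum>i\<in>I. f i x) has_sum (\<Sum>i\<in>I. S i)) A"
proof -
  have "((\<lambda>F. \<Sum>i\<in>I. sum (f i) F) \<longlongrightarrow> (\<Sum>i\<in>I. S i)) (finite_subsets_at_top A)"
    using assms by (intro tendsto_sum) (simp add: has_sum_def)
  moreover have "sum (\<lambda>x. \<Sum>i\<in>I. f i x) = (\<lambda>F. \<Sum>i\<in>I. sum (f i) F)"
    by (rule ext) (rule sum.swap)
  ultimately show ?thesis
    by (simp add: has_sum_def)
qed

lemma infsum_sum_nonneg:
  fixes f :: "'i \<Rightarrow> 'a \<Rightarrow> real"
  assumes "finite I" "\<And>i x. i \<in> I \<Longrightarrow> x \<in> A \<Longrightarrow> 0 \<le> f i x"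
    and "(\<lambda>x. \<Sum>i\<in>I. f i x) summable_on A"
  shows "infsum (\<lambda>x. \<Sum>i\<in>I. f i x) A = (\<Sum>i\<in>I. infsum (f i) A)"
proof -
  have "f i summable_on A" if "i \<in> I" for i
    using assms(3)
  proof (rule summable_on_comparison_test)
    fix x assume "x \<in> A"
    then show "f i x \<le> (\<Sum>i\<in>I. f i x)"
      by (intro member_le_sum) (use assms(1,2) that in auto)
    show "0 \<le> f i x"
      using assms(2) that \<open>x \<in> A\<close> by simp
  qed
  then show ?thesis
    by (intro infsumI has_sum_sum) (simp add: has_sum_infsum)
qed

lemma lists_nth_in_eq_image_PiE:
  "{vs. length vs = m \<and> (\<forall>j<m. vs!j \<in> B j)} = (\<lambda>g. map g [0..<m]) ` PiE {..<m} B"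
proof (intro set_eqI iffI)
  fix vs assume "vs \<in> {vs. length vs = m \<and> (\<forall>j<m. vs!j \<in> B j)}"
  then have "restrict ((!) vs) {..<m} \<in> PiE {..<m} B" "vs = map (restrict ((!) vs) {..<m}) [0..<m]"
    by (auto intro: nth_equalityI)
  then show "vs \<in> (\<lambda>g. map g [0..<m]) ` PiE {..<m} B" by blast
next
  fix vs assume "vs \<in> (\<lambda>g. map g [0..<m]) ` PiE {..<m} B"
  then obtain g where "g \<in> PiE {..<m} B" "vs = map g [0..<m]" by blast
  then show "vs \<in> {vs. length vs = m \<and> (\<forall>j<m. vs!j \<in> B j)}" by auto
qed

lemma inj_on_map_upt_PiE: "inj_on (\<lambda>g. map g [0..<m]) (PiE {..<m} B)"
proof (rule inj_onI)
  fix g h assume "g \<in> PiE {..<m} B" "h \<in> PiE {..<m} B" "map g [0..<m] = map h [0..<m]"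
  then show "g = h"
    by (intro PiE_ext) (auto simp: map_eq_conv)
qed

lemma finite_lists_nth_in:
  "(\<And>j. j < m \<Longrightarrow> finite (B j)) \<Longrightarrow> finite {vs. length vs = m \<and> (\<forall>j<m. vs!j \<in> B j)}"
  unfolding lists_nth_in_eq_image_PiE by (intro finite_imageI finite_PiE) auto

lemma prod_sum_eq_sum_lists:
  fixes f :: "nat \<Rightarrow> 'b \<Rightarrow> 'c :: comm_semiring_1"
  assumes "\<And>j. j < m \<Longrightarrow> finite (B j)"
  shows "(\<Prod>j<m. \<Sum>v\<in>B j. f j v) =
    (\<Sum>vs\<in>{vs. length vs = m \<and> (\<forall>j<m. vs!j \<in> B j)}. \<Prod>j<m. f j (vs!j))"
  using assms prod_sum_PiE[of "{..<m}" B f]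
  by (simp add: lists_nth_in_eq_image_PiE sum.reindex inj_on_map_upt_PiE)

definition qzeta_term :: "real \<Rightarrow> real \<Rightarrow> nat \<Rightarrow> real" where
  "qzeta_term q s k = q powr ((s - 1) * real k) / qnum q (real k) powr s"

definition strict_decr_lists :: "nat \<Rightarrow> nat list set" where
  "strict_decr_lists m = {ks. length ks = m \<and> sorted_wrt (>) ks \<and> (\<forall>k\<in>set ks. 0 < k)}"

lemma mqzeta_eq_infsum:
  "mqzeta q s = infsum (\<lambda>ks. \<Prod>j<length s. qzeta_term q (s!j) (ks!j)) (strict_decr_lists (length s))"
  by (simp add: mqzeta_def qzeta_term_def strict_decr_lists_def)

lemma mqzeta_singleton: "mqzeta q [s] = infsum (qzeta_term q s) {0<..}"
proof -
  have "strict_decr_lists (length [s]) = (\<lambda>k. [k]) ` {0<..}"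
    by (auto simp: strict_decr_lists_def length_Suc_conv)
  then show ?thesis
    by (simp add: mqzeta_eq_infsum infsum_reindex inj_on_def o_def)
qed

lemma qnum_ge_1:
  assumes "0 < q" "q < 1" "0 < k"
  shows "1 \<le> qnum q (real k)"
proof -
  have "q powr real k \<le> q powr 1"
    using assms by (intro powr_mono') auto
  then show ?thesis using assms by (simp add: qnum_def field_simps)
qed

lemma one_minus_mult_qnum: "q \<noteq> 1 \<Longrightarrow> (1 - q) * qnum q x = 1 - q powr x"
  by (simp add: qnum_def)

lemma qzeta_term_nonneg: "0 < q \<Longrightarrow> q < 1 \<Longrightarrow> 0 \<le> qzeta_term q s k"
  by (cases "k = 0") (auto simp: qzeta_term_def qnum_def)

lemma qzeta_term_summable:
  assumes "0 < q" "q < 1" "1 < s"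
  shows "qzeta_term q s summable_on {0<..}"
proof -
  define r where "r = q powr (s - 1)"
  have r: "0 < r" "r < 1"
    using powr_less_mono2[of "s - 1" q 1] assms by (auto simp: r_def)
  have "(\<lambda>k. r ^ k) summable_on {0<..}"
  proof -
    have "(\<lambda>k. r ^ k) summable_on UNIV"
      using r by (subst summable_on_UNIV_nonneg_real_iff) (auto intro: summable_geometric)
    then show ?thesis by (rule summable_on_subset_banach) auto
  qed
  then show ?thesis
  proof (rule summable_on_comparison_test)
    fix k :: nat assume k: "k \<in> {0<..}"
    have "qzeta_term q s k \<le> q powr ((s - 1) * real k) / 1"
      unfolding qzeta_term_def using qnum_ge_1[OF assms(1,2), of k] k assms
      by (intro divide_left_mono) (auto intro: ge_one_powr_ge_zero)
    also have "\<dots> = r ^ k"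
      using assms by (simp add: r_def powr_powr[symmetric] powr_realpow)
    finally show "qzeta_term q s k \<le> r ^ k" .
    show "0 \<le> qzeta_term q s k" using qzeta_term_nonneg assms by simp
  qed
qed

lemma qzeta_term_mult:
  assumes "0 < q" "q < 1" "0 < k"
  shows "qzeta_term q a k * qzeta_term q b k = qzeta_term q (a + b) k / q ^ k"
proof -
  have "q powr ((a - 1) * real k) * q powr ((b - 1) * real k)
      = q powr ((a + b - 1) * real k) / q powr real k"
    by (simp add: powr_add[symmetric] powr_diff[symmetric] algebra_simps)
  then show ?thesis
    using assms by (simp add: qzeta_term_def powr_add powr_realpow)
qed

lemma prod_qzeta_term:
  assumes "0 < q" "q < 1" "0 < k" "finite P" "P \<noteq> {}"
  shows "(\<Prod>i\<in>P. qzeta_term q (s i) k) = qzeta_term q (\<Sum>i\<in>P. s i) k / (q ^ k) ^ (card P - 1)"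
  using assms(4,5)
proof (induction P rule: finite_ne_induct)
  case (insert x P)
  then have "(q ^ k) ^ (card (insert x P) - 1) = q ^ k * (q ^ k) ^ (card P - 1)"
    by (simp add: card_gt_0_iff power_Suc[symmetric])
  with insert show ?case
    by (simp add: qzeta_term_mult[OF assms(1-3)] mult.commute)
qed simp

lemma qzeta_term_diff_of_nat:
  assumes "0 < q" "q < 1" "0 < k"
  shows "qzeta_term q (s - real \<nu>) k = (qnum q (real k) / q ^ k) ^ \<nu> * qzeta_term q s k"
proof -
  define Q where "Q = qnum q (real k)"
  have "Q > 0" using qnum_ge_1[OF assms] by (simp add: Q_def)
  have "(q ^ k) ^ \<nu> = q powr (real \<nu> * real k)"
    using assms by (simp add: powr_realpow[symmetric] powr_powr mult.commute)
  then have "q powr ((s - real \<nu> - 1) * real k) = q powr ((s - 1) * real k) / (q ^ k) ^ \<nu>"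
    by (simp add: powr_diff[symmetric] algebra_simps)
  moreover have "Q powr (s - real \<nu>) = Q powr s / Q ^ \<nu>"
    using \<open>Q > 0\<close> by (simp add: powr_diff powr_realpow)
  ultimately show ?thesis
    using \<open>Q > 0\<close> assms by (simp add: qzeta_term_def Q_def[symmetric] power_divide field_simps)
qed

lemma prod_qzeta_term_eq_binomial_sum:
  assumes "0 < q" "q < 1" "0 < k" "finite P" "P \<noteq> {}"
  shows "(\<Prod>i\<in>P. qzeta_term q (s i) k) =
    (\<Sum>\<nu><card P. real ((card P - 1) choose \<nu>) * (1 - q) ^ \<nu> *
       qzeta_term q ((\<Sum>i\<in>P. s i) - real \<nu>) k)"
proof -
  define N where "N = card P - 1"
  define p where "p = (\<Sum>i\<in>P. s i)"
  define x where "x = (1 - q) * (qnum q (real k) / q ^ k)"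
  have card: "card P = Suc N"
    using assms by (simp add: N_def card_gt_0_iff)
  have "(1 - q) * qnum q (real k) = 1 - q ^ k"
    using assms by (simp add: one_minus_mult_qnum powr_realpow)
  then have "x + 1 = 1 / q ^ k"
    using assms by (simp add: x_def field_simps)
  have "(\<Sum>\<nu><card P. real ((card P - 1) choose \<nu>) * (1 - q) ^ \<nu> * qzeta_term q (p - real \<nu>) k)
      = (\<Sum>\<nu>\<le>N. real (N choose \<nu>) * x ^ \<nu> * 1 ^ (N - \<nu>)) * qzeta_term q p k"
    unfolding card lessThan_Suc_atMost x_def power_mult_distrib
    by (simp add: qzeta_term_diff_of_nat[OF assms(1-3)] sum_distrib_left N_def mult_ac)
  also have "\<dots> = (x + 1) ^ N * qzeta_term q p k"
    by (simp only: binomial_ring)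
  also have "\<dots> = (\<Prod>i\<in>P. qzeta_term q (s i) k)"
    using prod_qzeta_term[OF assms] \<open>x + 1 = 1 / q ^ k\<close>
    by (simp add: p_def N_def power_one_over)
  finally show ?thesis by (simp add: p_def)
qed

lemma ordered_set_partitions_length: "Ps \<in> ordered_set_partitions A m \<Longrightarrow> length Ps = m"
  by (simp add: ordered_set_partitions_def)

lemma ordered_set_partitions_subset: "Ps \<in> ordered_set_partitions A m \<Longrightarrow> j < m \<Longrightarrow> Ps!j \<subseteq> A"
  unfolding ordered_set_partitions_def by (auto simp: set_conv_nth)

lemma ordered_set_partitions_nonempty: "Ps \<in> ordered_set_partitions A m \<Longrightarrow> j < m \<Longrightarrow> Ps!j \<noteq> {}"
  unfolding ordered_set_partitions_def by auto

lemma ordered_set_partitions_disjoint: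
  "Ps \<in> ordered_set_partitions A m \<Longrightarrow> i < m \<Longrightarrow> j < m \<Longrightarrow> i \<noteq> j \<Longrightarrow> Ps!i \<inter> Ps!j = {}"
  unfolding ordered_set_partitions_def by auto

lemma ordered_set_partitions_UN: "Ps \<in> ordered_set_partitions A m \<Longrightarrow> (\<Union>j<m. Ps!j) = A"
  unfolding ordered_set_partitions_def by (auto simp: set_conv_nth)

lemma finite_ordered_set_partitions: "finite A \<Longrightarrow> finite (ordered_set_partitions A m)"
  by (rule finite_subset[of _ "{Ps. set Ps \<subseteq> Pow A \<and> length Ps = m}"])
    (auto simp: ordered_set_partitions_def intro: finite_lists_length_eq)

definition block_index :: "'a set list \<Rightarrow> 'a \<Rightarrow> nat" where
  "block_index Ps i = (THE j. j < length Ps \<and> i \<in> Ps!j)"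

lemma block_index_eq:
  assumes "Ps \<in> ordered_set_partitions A m" "j < m" "i \<in> Ps!j"
  shows "block_index Ps i = j"
  unfolding block_index_def
proof (rule the_equality)
  show "j < length Ps \<and> i \<in> Ps!j"
    using assms ordered_set_partitions_length by auto
next
  fix j' assume "j' < length Ps \<and> i \<in> Ps!j'"
  then show "j' = j"
    using ordered_set_partitions_disjoint[OF assms(1), of j' j] assms
      ordered_set_partitions_length[OF assms(1)] by auto
qed

lemma block_index_mem:
  assumes "Ps \<in> ordered_set_partitions A m" "i \<in> A"
  shows "block_index Ps i < m" "i \<in> Ps ! block_index Ps i"
proof -
  obtain j where "j < m" "i \<in> Ps!j"
    using ordered_set_partitions_UN[OF assms(1)] assms(2) by auto
  then show "block_index Ps i < m" "i \<in> Ps ! block_index Ps i"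
    using block_index_eq[OF assms(1)] by auto
qed

definition level_values :: "'a set \<Rightarrow> ('a \<Rightarrow> nat) \<Rightarrow> nat list" where
  "level_values A K = rev (sorted_list_of_set (K ` A))"

definition level_sets :: "'a set \<Rightarrow> ('a \<Rightarrow> nat) \<Rightarrow> 'a set list" where
  "level_sets A K = map (\<lambda>v. {i\<in>A. K i = v}) (level_values A K)"

definition blockwise_function :: "'a set \<Rightarrow> 'a set list \<Rightarrow> nat list \<Rightarrow> 'a \<Rightarrow> nat" where
  "blockwise_function A Ps ks = restrict (\<lambda>i. ks ! block_index Ps i) A"

lemma strict_decr_lists_sorted_rev:
  "ks \<in> strict_decr_lists m \<Longrightarrow> sorted (rev ks) \<and> distinct ks"
  using strict_sorted_iff[of "rev ks"] by (simp add: strict_decr_lists_def sorted_wrt_rev)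

lemma level_values_strict_decr:
  assumes "finite A" "K \<in> PiE A (\<lambda>_. {0<..})"
  shows "level_values A K \<in> strict_decr_lists (card (K ` A))"
  using assms
  by (auto simp: strict_decr_lists_def level_values_def sorted_wrt_rev
      length_sorted_list_of_set)

lemma level_sets_ordered_set_partition:
  assumes "finite A"
  shows "level_sets A K \<in> ordered_set_partitions A (card (K ` A))"
  unfolding ordered_set_partitions_def
proof (intro CollectI conjI allI impI)
  let ?ks = "level_values A K"
  have set_ks: "set ?ks = K ` A" and "distinct ?ks"
    using assms by (simp_all add: level_values_def)
  then have len: "length ?ks = card (K ` A)"
    by (metis distinct_card)
  then show "length (level_sets A K) = card (K ` A)"
    by (simp add: level_sets_def)
  fix j assume j: "j < card (K ` A)"
  then show "level_sets A K ! j \<noteq> {}"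
    using nth_mem[of j ?ks] set_ks len by (force simp: level_sets_def)
  fix i assume "i < card (K ` A)" "i \<noteq> j"
  then show "level_sets A K ! i \<inter> level_sets A K ! j = {}"
    using j len \<open>distinct ?ks\<close> by (auto simp: level_sets_def nth_eq_iff_index_eq)
next
  show "\<Union> (set (level_sets A K)) = A"
    using assms by (auto simp: level_sets_def level_values_def)
qed

lemma length_level_sets: "finite A \<Longrightarrow> length (level_sets A K) = card (K ` A)"
  using level_sets_ordered_set_partition ordered_set_partitions_length by blast

lemma blockwise_function_level_sets:
  assumes "finite A" "K \<in> PiE A (\<lambda>_. {0<..})"
  shows "blockwise_function A (level_sets A K) (level_values A K) = K"
proof
  fix i
  show "blockwise_function A (level_sets A K) (level_values A K) i = K i"
  proof (cases "i \<in> A")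
    case True
    then have "K i \<in> set (level_values A K)"
      using assms(1) by (simp add: level_values_def)
    then obtain j where j: "j < length (level_values A K)" "level_values A K ! j = K i"
      by (auto simp: in_set_conv_nth)
    have "length (level_values A K) = card (K ` A)"
      using level_values_strict_decr[OF assms] by (simp add: strict_decr_lists_def)
    moreover have "i \<in> level_sets A K ! j"
      using True j by (simp add: level_sets_def)
    ultimately have "block_index (level_sets A K) i = j"
      using block_index_eq[OF level_sets_ordered_set_partition[OF assms(1)]] j by simp
    then show ?thesis
      using True j by (simp add: blockwise_function_def)
  next
    case False
    then show ?thesis
      using assms(2) by (simp add: blockwise_function_def PiE_def extensional_def)
  qed
qed

lemma blockwise_function_PiE:
  assumes "Ps \<in> ordered_set_partitions A m" "ks \<in> strict_decr_lists m"
  shows "blockwise_function A Ps ks \<in> PiE A (\<lambda>_. {0<..})"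
  using block_index_mem[OF assms(1)] assms(2)
  by (auto simp: blockwise_function_def strict_decr_lists_def)

lemma image_blockwise_function:
  assumes "Ps \<in> ordered_set_partitions A m" "ks \<in> strict_decr_lists m"
  shows "blockwise_function A Ps ks ` A = set ks"
proof
  show "blockwise_function A Ps ks ` A \<subseteq> set ks"
    using block_index_mem[OF assms(1)] assms(2)
    by (auto simp: blockwise_function_def strict_decr_lists_def)
  show "set ks \<subseteq> blockwise_function A Ps ks ` A"
  proof
    fix v assume "v \<in> set ks"
    then obtain j where j: "j < m" "ks!j = v"
      using assms(2) by (auto simp: in_set_conv_nth strict_decr_lists_def)
    obtain i where i: "i \<in> Ps!j"
      using ordered_set_partitions_nonempty[OF assms(1) j(1)] by auto
    then have "i \<in> A"
      using ordered_set_partitions_subset[OF assms(1) j(1)] by auto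
    with i j show "v \<in> blockwise_function A Ps ks ` A"
      using block_index_eq[OF assms(1) j(1) i] by (force simp: blockwise_function_def)
  qed
qed

lemma level_values_blockwise_function:
  assumes "Ps \<in> ordered_set_partitions A m" "ks \<in> strict_decr_lists m"
  shows "level_values A (blockwise_function A Ps ks) = ks"
proof -
  have "sorted (rev ks)" "distinct (rev ks)"
    using strict_decr_lists_sorted_rev[OF assms(2)] by auto
  then have "sorted_list_of_set (set (rev ks)) = rev ks"
    by (metis sorted_list_of_set_sort_remdups distinct_remdups_id sorted_sort_id)
  then show ?thesis
    by (simp add: level_values_def image_blockwise_function[OF assms])
qed

lemma level_sets_blockwise_function:
  assumes "Ps \<in> ordered_set_partitions A m" "ks \<in> strict_decr_lists m"
  shows "level_sets A (blockwise_function A Ps ks) = Ps"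
proof (rule nth_equalityI)
  have len: "length ks = m" "length Ps = m"
    using assms ordered_set_partitions_length by (auto simp: strict_decr_lists_def)
  then show "length (level_sets A (blockwise_function A Ps ks)) = length Ps"
    by (simp add: level_sets_def level_values_blockwise_function[OF assms])
  fix j assume "j < length (level_sets A (blockwise_function A Ps ks))"
  then have j: "j < m"
    by (simp add: level_sets_def level_values_blockwise_function[OF assms] len)
  have "i \<in> Ps!j \<longleftrightarrow> i \<in> A \<and> ks ! block_index Ps i = ks ! j" for i
  proof
    assume i: "i \<in> Ps!j"
    then show "i \<in> A \<and> ks ! block_index Ps i = ks ! j"
      using ordered_set_partitions_subset[OF assms(1) j] block_index_eq[OF assms(1) j i] by auto
  next
    assume i: "i \<in> A \<and> ks ! block_index Ps i = ks ! j"
    moreover have "distinct ks"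
      using strict_decr_lists_sorted_rev[OF assms(2)] by simp
    moreover have "block_index Ps i < m"
      using block_index_mem(1)[OF assms(1)] i by simp
    ultimately have "block_index Ps i = j"
      using nth_eq_iff_index_eq[of ks "block_index Ps i" j] j len by simp
    then show "i \<in> Ps!j"
      using block_index_mem[OF assms(1)] i by auto
  qed
  moreover have "level_sets A (blockwise_function A Ps ks) ! j
      = {i \<in> A. blockwise_function A Ps ks i = ks ! j}"
    using j len by (simp add: level_sets_def level_values_blockwise_function[OF assms])
  moreover have "\<dots> = {i \<in> A. ks ! block_index Ps i = ks ! j}"
    by (auto simp: blockwise_function_def)
  ultimately show "level_sets A (blockwise_function A Ps ks) ! j = Ps ! j"
    by blast
qed

lemma prod_blockwise_function:
  assumes "Ps \<in> ordered_set_partitions A m" "finite A"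
  shows "(\<Prod>i\<in>A. f i (blockwise_function A Ps ks i)) = (\<Prod>j<m. \<Prod>i\<in>Ps!j. f i (ks!j))"
proof -
  have "(\<Prod>i\<in>A. f i (blockwise_function A Ps ks i))
      = (\<Prod>i\<in>(\<Union>j<m. Ps!j). f i (blockwise_function A Ps ks i))"
    by (simp add: ordered_set_partitions_UN[OF assms(1)])
  also have "\<dots> = (\<Prod>j<m. \<Prod>i\<in>Ps!j. f i (blockwise_function A Ps ks i))"
    using ordered_set_partitions_subset[OF assms(1)] ordered_set_partitions_disjoint[OF assms(1)]
      assms(2)
    by (intro prod.UNION_disjoint) (auto intro: finite_subset)
  also have "\<dots> = (\<Prod>j<m. \<Prod>i\<in>Ps!j. f i (ks!j))"
    using block_index_eq[OF assms(1)] ordered_set_partitions_subset[OF assms(1)]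
    by (intro prod.cong refl) (auto simp: blockwise_function_def)
  finally show ?thesis .
qed

definition level_decompositions :: "'a set \<Rightarrow> ('a set list \<times> nat list) set" where
  "level_decompositions A =
    Sigma (\<Union>m\<in>{1..card A}. ordered_set_partitions A m) (\<lambda>Ps. strict_decr_lists (length Ps))"

lemma level_decomposition_mem:
  assumes "finite A" "A \<noteq> {}" "K \<in> PiE A (\<lambda>_. {0<..})"
  shows "(level_sets A K, level_values A K) \<in> level_decompositions A"
proof -
  have "card (K ` A) \<in> {1..card A}"
    using assms by (auto simp: Suc_le_eq card_gt_0_iff card_image_le)
  then show ?thesis
    using level_sets_ordered_set_partition[OF assms(1)] level_values_strict_decr[OF assms(1,3)]
      length_level_sets[OF assms(1)]
    by (auto simp: level_decompositions_def intro!: bexI[of _ "card (K ` A)"])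
qed

lemma level_decompositionsE:
  assumes "d \<in> level_decompositions A"
  obtains m Ps ks where "d = (Ps, ks)" "m \<in> {1..card A}" "Ps \<in> ordered_set_partitions A m"
    "ks \<in> strict_decr_lists m"
  using assms ordered_set_partitions_length by (fastforce simp: level_decompositions_def)

lemma has_sum_PiE_positive_iff_level_decompositions:
  assumes "finite A" "A \<noteq> {}"
  shows "((\<lambda>K. \<Prod>i\<in>A. f i (K i)) has_sum S) (PiE A (\<lambda>_. {0<..})) \<longleftrightarrow>
    ((\<lambda>(Ps, ks). \<Prod>j<length Ps. \<Prod>i\<in>Ps!j. f i (ks!j)) has_sum S) (level_decompositions A)"
proof (rule has_sum_reindex_bij_witness[where i = "\<lambda>(Ps, ks). blockwise_function A Ps ks"
      and j = "\<lambda>K. (level_sets A K, level_values A K)"])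
  fix K :: "'a \<Rightarrow> nat" assume K: "K \<in> PiE A (\<lambda>_. {0<..})"
  show "(case (level_sets A K, level_values A K) of (Ps, ks) \<Rightarrow> blockwise_function A Ps ks) = K"
    using blockwise_function_level_sets[OF assms(1) K] by simp
  show "(level_sets A K, level_values A K) \<in> level_decompositions A"
    using level_decomposition_mem[OF assms K] .
  show "(case (level_sets A K, level_values A K) of
      (Ps, ks) \<Rightarrow> \<Prod>j<length Ps. \<Prod>i\<in>Ps!j. f i (ks!j)) = (\<Prod>i\<in>A. f i (K i))"
    using prod_blockwise_function[OF level_sets_ordered_set_partition[OF assms(1), of K] assms(1),
        where f = f and ks = "level_values A K"]
    by (simp add: blockwise_function_level_sets[OF assms(1) K] length_level_sets[OF assms(1)])
next
  fix d assume "d \<in> level_decompositions A"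
  then obtain m Ps ks where d: "d = (Ps, ks)" and Ps: "Ps \<in> ordered_set_partitions A m"
    and ks: "ks \<in> strict_decr_lists m"
    by (rule level_decompositionsE)
  show "(level_sets A (case d of (Ps, ks) \<Rightarrow> blockwise_function A Ps ks),
      level_values A (case d of (Ps, ks) \<Rightarrow> blockwise_function A Ps ks)) = d"
    using level_sets_blockwise_function[OF Ps ks] level_values_blockwise_function[OF Ps ks] d by simp
  show "(case d of (Ps, ks) \<Rightarrow> blockwise_function A Ps ks) \<in> PiE A (\<lambda>_. {0<..})"
    using blockwise_function_PiE[OF Ps ks] d by simp
qed simp

lemma infsum_PiE_positive_eq_sum_ordered_set_partitions:
  fixes f :: "'a \<Rightarrow> nat \<Rightarrow> 'c :: {banach, comm_monoid_mult}"
  assumes "finite A" "A \<noteq> {}"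
    and summable: "(\<lambda>K. \<Prod>i\<in>A. f i (K i)) summable_on PiE A (\<lambda>_. {0<..})"
  shows "infsum (\<lambda>K. \<Prod>i\<in>A. f i (K i)) (PiE A (\<lambda>_. {0<..})) =
      (\<Sum>m=1..card A. \<Sum>Ps\<in>ordered_set_partitions A m.
         infsum (\<lambda>ks. \<Prod>j<m. \<Prod>i\<in>Ps!j. f i (ks!j)) (strict_decr_lists m))"
    and "m \<in> {1..card A} \<Longrightarrow> Ps \<in> ordered_set_partitions A m \<Longrightarrow>
      (\<lambda>ks. \<Prod>j<m. \<Prod>i\<in>Ps!j. f i (ks!j)) summable_on strict_decr_lists m"
proof -
  define P where "P = (\<Union>m\<in>{1..card A}. ordered_set_partitions A m)"
  define H where "H Ps ks = (\<Prod>j<length Ps. \<Prod>i\<in>Ps!j. f i (ks!j))" for Ps ks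
  have "((\<lambda>(Ps, ks). H Ps ks) has_sum infsum (\<lambda>K. \<Prod>i\<in>A. f i (K i)) (PiE A (\<lambda>_. {0<..})))
      (level_decompositions A)"
    unfolding H_def
    by (rule has_sum_PiE_positive_iff_level_decompositions[OF assms(1,2), THEN iffD1])
      (use summable in \<open>simp add: summable_iff_has_sum_infsum\<close>)
  moreover have "level_decompositions A = Sigma P (\<lambda>Ps. strict_decr_lists (length Ps))"
    by (simp add: level_decompositions_def P_def)
  ultimately have H: "(\<lambda>(Ps, ks). H Ps ks) summable_on Sigma P (\<lambda>Ps. strict_decr_lists (length Ps))"
    and infsum_eq: "infsum (\<lambda>K. \<Prod>i\<in>A. f i (K i)) (PiE A (\<lambda>_. {0<..}))
      = infsum (\<lambda>(Ps, ks). H Ps ks) (Sigma P (\<lambda>Ps. strict_decr_lists (length Ps)))"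
    by (auto simp: has_sum_iff)
  show "(\<lambda>ks. \<Prod>j<m. \<Prod>i\<in>Ps!j. f i (ks!j)) summable_on strict_decr_lists m"
    if "m \<in> {1..card A}" "Ps \<in> ordered_set_partitions A m"
  proof -
    have "(\<lambda>(Ps, ks). H Ps ks) summable_on Pair Ps ` strict_decr_lists m"
        using that ordered_set_partitions_length[OF that(2)]
      by (intro summable_on_subset_banach[OF H]) (auto simp: P_def)
    then have "(\<lambda>ks. H Ps ks) summable_on strict_decr_lists m"
      by (simp add: summable_on_reindex inj_on_def o_def)
    then show ?thesis
      using ordered_set_partitions_length[OF that(2)] by (simp add: H_def)
  qed
  have "infsum (\<lambda>(Ps, ks). H Ps ks) (Sigma P (\<lambda>Ps. strict_decr_lists (length Ps)))
      = (\<Sum>Ps\<in>P. infsum (H Ps) (strict_decr_lists (length Ps)))"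
    using infsum_Sigma'_banach[OF H] finite_ordered_set_partitions[OF assms(1)]
    by (simp add: P_def)
  also have "\<dots> = (\<Sum>m=1..card A. \<Sum>Ps\<in>ordered_set_partitions A m.
      infsum (H Ps) (strict_decr_lists (length Ps)))"
    unfolding P_def
    by (rule sum.UNION_disjoint)
      (auto simp: finite_ordered_set_partitions[OF assms(1)] dest: ordered_set_partitions_length)
  finally show "infsum (\<lambda>K. \<Prod>i\<in>A. f i (K i)) (PiE A (\<lambda>_. {0<..})) =
      (\<Sum>m=1..card A. \<Sum>Ps\<in>ordered_set_partitions A m.
         infsum (\<lambda>ks. \<Prod>j<m. \<Prod>i\<in>Ps!j. f i (ks!j)) (strict_decr_lists m))"
    unfolding infsum_eq H_def
    by (auto intro!: sum.cong dest: ordered_set_partitions_length)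
qed

lemma prod_blocks_qzeta_term_eq_sum:
  assumes "0 < q" "q < 1" "Ps \<in> ordered_set_partitions A m" "finite A"
    and "ks \<in> strict_decr_lists m"
  shows "(\<Prod>j<m. \<Prod>i\<in>Ps!j. qzeta_term q (s i) (ks!j)) =
    (\<Sum>\<nu>s\<in>{\<nu>s. length \<nu>s = m \<and> (\<forall>j<m. \<nu>s!j < card (Ps!j))}.
       (\<Prod>j<m. qzeta_term q ((\<Sum>i\<in>Ps!j. s i) - real (\<nu>s!j)) (ks!j)) *
       (\<Prod>j<m. real ((card (Ps!j) - 1) choose (\<nu>s!j)) * (1 - q) ^ (\<nu>s!j)))"
proof -
  have "(\<Prod>j<m. \<Prod>i\<in>Ps!j. qzeta_term q (s i) (ks!j)) =
      (\<Prod>j<m. \<Sum>\<nu>\<in>{..<card (Ps!j)}. real ((card (Ps!j) - 1) choose \<nu>) * (1 - q) ^ \<nu> *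
         qzeta_term q ((\<Sum>i\<in>Ps!j. s i) - real \<nu>) (ks!j))"
  proof (rule prod.cong[OF refl])
    fix j assume "j \<in> {..<m}"
    then have j: "j < m" by simp
    have "0 < ks!j"
      using assms(5) j by (auto simp: strict_decr_lists_def)
    moreover have "finite (Ps!j)" "Ps!j \<noteq> {}"
      using ordered_set_partitions_subset[OF assms(3) j] ordered_set_partitions_nonempty[OF assms(3) j]
        assms(4) by (auto intro: finite_subset)
    ultimately show "(\<Prod>i\<in>Ps!j. qzeta_term q (s i) (ks!j)) = (\<Sum>\<nu>\<in>{..<card (Ps!j)}.
        real ((card (Ps!j) - 1) choose \<nu>) * (1 - q) ^ \<nu> * qzeta_term q ((\<Sum>i\<in>Ps!j. s i) - real \<nu>) (ks!j))"
      using prod_qzeta_term_eq_binomial_sum[OF assms(1,2)] by blast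
  qed
  also have "\<dots> = (\<Sum>\<nu>s\<in>{\<nu>s. length \<nu>s = m \<and> (\<forall>j<m. \<nu>s!j \<in> {..<card (Ps!j)})}.
      \<Prod>j<m. real ((card (Ps!j) - 1) choose (\<nu>s!j)) * (1 - q) ^ (\<nu>s!j) *
        qzeta_term q ((\<Sum>i\<in>Ps!j. s i) - real (\<nu>s!j)) (ks!j))"
    by (rule prod_sum_eq_sum_lists) simp
  finally show ?thesis
    by (simp add: prod.distrib mult.commute)
qed

lemma infsum_prod_blocks_qzeta_term:
  assumes q: "0 < q" "q < 1" and Ps: "Ps \<in> ordered_set_partitions A m" and "finite A"
    and summable: "(\<lambda>ks. \<Prod>j<m. \<Prod>i\<in>Ps!j. qzeta_term q (s i) (ks!j)) summable_on strict_decr_lists m"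
  shows "infsum (\<lambda>ks. \<Prod>j<m. \<Prod>i\<in>Ps!j. qzeta_term q (s i) (ks!j)) (strict_decr_lists m) =
    (\<Sum>\<nu>s\<in>{\<nu>s. length \<nu>s = m \<and> (\<forall>j<m. \<nu>s!j < card (Ps!j))}.
       mqzeta q (map (\<lambda>j. (\<Sum>i\<in>Ps!j. s i) - real (\<nu>s!j)) [0..<m]) *
       (\<Prod>j<m. real ((card (Ps!j) - 1) choose (\<nu>s!j)) * (1 - q) ^ (\<nu>s!j)))"
proof -
  define N where "N = {\<nu>s. length \<nu>s = m \<and> (\<forall>j<m. \<nu>s!j < card (Ps!j))}"
  define Z where "Z \<nu>s = (\<lambda>ks. \<Prod>j<m. qzeta_term q ((\<Sum>i\<in>Ps!j. s i) - real (\<nu>s!j)) (ks!j))"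
    for \<nu>s
  define C where "C \<nu>s = (\<Prod>j<m. real ((card (Ps!j) - 1) choose (\<nu>s!j)) * (1 - q) ^ (\<nu>s!j))"
    for \<nu>s
  have expand: "(\<Prod>j<m. \<Prod>i\<in>Ps!j. qzeta_term q (s i) (ks!j)) = (\<Sum>\<nu>s\<in>N. Z \<nu>s ks * C \<nu>s)"
    if "ks \<in> strict_decr_lists m" for ks
    using prod_blocks_qzeta_term_eq_sum[OF q Ps \<open>finite A\<close> that] by (simp add: N_def Z_def C_def)
  have "finite N"
    using finite_lists_nth_in[of m "\<lambda>j. {..<card (Ps!j)}"] by (simp add: N_def)
  moreover have "0 \<le> Z \<nu>s ks * C \<nu>s" for \<nu>s ks
    using q qzeta_term_nonneg by (simp add: Z_def C_def prod_nonneg)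
  moreover have "(\<lambda>ks. \<Sum>\<nu>s\<in>N. Z \<nu>s ks * C \<nu>s) summable_on strict_decr_lists m"
    by (rule summable_on_cong[THEN iffD1, OF expand summable])
  ultimately have "infsum (\<lambda>ks. \<Sum>\<nu>s\<in>N. Z \<nu>s ks * C \<nu>s) (strict_decr_lists m)
      = (\<Sum>\<nu>s\<in>N. infsum (Z \<nu>s) (strict_decr_lists m) * C \<nu>s)"
    by (simp add: infsum_sum_nonneg infsum_cmult_left')
  moreover have "mqzeta q (map (\<lambda>j. (\<Sum>i\<in>Ps!j. s i) - real (\<nu>s!j)) [0..<m])
      = infsum (Z \<nu>s) (strict_decr_lists m)" for \<nu>s
    by (simp add: mqzeta_eq_infsum Z_def)
  moreover have "infsum (\<lambda>ks. \<Prod>j<m. \<Prod>i\<in>Ps!j. qzeta_term q (s i) (ks!j)) (strict_decr_lists m)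
      = infsum (\<lambda>ks. \<Sum>\<nu>s\<in>N. Z \<nu>s ks * C \<nu>s) (strict_decr_lists m)"
    by (rule infsum_cong) (simp add: expand)
  ultimately show ?thesis
    by (simp add: N_def C_def)
qed

theorem theorem2p2:
  fixes q :: real and n :: nat and s :: "nat \<Rightarrow> real"
  assumes "0 < q" and "q < 1" and "1 \<le> n" and "\<forall>k\<in>{1..n}. s k > 1"
  shows "(\<Prod>k=1..n. mqzeta q [s k]) =
    (\<Sum>m=1..n. \<Sum>Ps\<in>ordered_set_partitions {1..n} m.
       \<Sum>\<nu>s\<in>{\<nu>s. length \<nu>s = m \<and> (\<forall>j<m. \<nu>s!j < card (Ps!j))}.
         mqzeta q (map (\<lambda>j. (\<Sum>i\<in>Ps!j. s i) - real (\<nu>s!j)) [0..<m]) *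
         (\<Prod>j<m. real ((card (Ps!j) - 1) choose (\<nu>s!j)) * (1 - q) ^ (\<nu>s!j)))"
proof -
  have A: "finite {1..n}" "{1..n} \<noteq> {}" "card {1..n} = n"
    using assms(3) by auto
  have abs_summable: "(\<lambda>k. norm (qzeta_term q (s i) k)) summable_on {0<..}" if "i \<in> {1..n}" for i
    using qzeta_term_summable[OF assms(1,2)] qzeta_term_nonneg[OF assms(1,2)] assms(4) that by simp
  then have summable: "(\<lambda>K. \<Prod>i\<in>{1..n}. qzeta_term q (s i) (K i)) summable_on PiE {1..n} (\<lambda>_. {0<..})"
    by (intro summable_on_prod_PiE) auto
  have "(\<Prod>k=1..n. mqzeta q [s k]) = (\<Prod>i\<in>{1..n}. infsum (qzeta_term q (s i)) {0<..})"
    by (simp add: mqzeta_singleton)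
  also have "\<dots> = infsum (\<lambda>K. \<Prod>i\<in>{1..n}. qzeta_term q (s i) (K i)) (PiE {1..n} (\<lambda>_. {0<..}))"
    using abs_summable by (intro infsum_prod_PiE_abs[symmetric]) auto
  also have "\<dots> = (\<Sum>m=1..n. \<Sum>Ps\<in>ordered_set_partitions {1..n} m.
      infsum (\<lambda>ks. \<Prod>j<m. \<Prod>i\<in>Ps!j. qzeta_term q (s i) (ks!j)) (strict_decr_lists m))"
    using infsum_PiE_positive_eq_sum_ordered_set_partitions(1)[OF A(1,2) summable] A(3) by simp
  also have "\<dots> = (\<Sum>m=1..n. \<Sum>Ps\<in>ordered_set_partitions {1..n} m.
       \<Sum>\<nu>s\<in>{\<nu>s. length \<nu>s = m \<and> (\<forall>j<m. \<nu>s!j < card (Ps!j))}.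
         mqzeta q (map (\<lambda>j. (\<Sum>i\<in>Ps!j. s i) - real (\<nu>s!j)) [0..<m]) *
         (\<Prod>j<m. real ((card (Ps!j) - 1) choose (\<nu>s!j)) * (1 - q) ^ (\<nu>s!j)))"
    using infsum_PiE_positive_eq_sum_ordered_set_partitions(2)[OF A(1,2) summable] A(3)
    by (intro sum.cong refl infsum_prod_blocks_qzeta_term[OF assms(1,2) _ A(1)]) auto
  finally show ?thesis .
qed

end
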